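(* For every integer $n\ge 1$, $7 P_{n}^2= -3 P_{n-1}^2+2 P_{n}P_{n-1}-4P_{n+1}^{2}-2 P_{2 n}+2 P_{n} P_{n+1} +3 P_{2 n-1}+4 P_{2 n+1}$, where $P_k$ denotes the $k$-th Pell number.
   Context: The Pell numbers are defined by $P_0=0$, $P_1=1$, $P_k=2P_{k-1}+P_{k-2}$ for $k\ge 2$. *)

theory Defs
  imports Main
begin

fun pell :: "nat \<Rightarrow> int" where
  "pell 0 = 0"
| "pell (Suc 0) = 1"
| "pell (Suc (Suc k)) = 2 * pell (Suc k) + pell k"

end

theory Submission
  imports Defs
begin

text \<open>The addition formula P(m+n+1) = P(m+1) P(n+1) + P(m) P(n) expresses P(2n-1), P(2n) and
  P(2n+1) through a = P(n), b = P(n-1) and c = P(n+1) = 2a + b. Substituting, the right-hand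
  side collapses to 3a^2 + 4a^2 = 7a^2.\<close>

lemma pell_add: "pell (m + n + 1) = pell (m + 1) * pell (n + 1) + pell m * pell n"
proof (induction m arbitrary: n)
  case 0
  then show ?case by simp
next
  case (Suc m)
  have "pell (Suc m + n + 1) = pell (m + Suc n + 1)"
    by simp
  also have "\<dots> = pell (Suc m) * pell (Suc (Suc n)) + pell m * pell (Suc n)"
    using Suc.IH[of "Suc n"] by simp
  also have "\<dots> = pell (Suc (Suc m)) * pell (Suc n) + pell (Suc m) * pell n"
    by (simp add: algebra_simps)
  finally show ?case
    by simp
qed

lemma pell_double_Suc: "pell (2 * n + 1) = (pell (n + 1))\<^sup>2 + (pell n)\<^sup>2"
  using pell_add[of n n] by (simp add: mult_2 power2_eq_square)

lemma pell_double: "pell (2 * n) = pell n * (pell (n + 1) + pell (n - 1))"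
proof (cases n)
  case (Suc m)
  then have "2 * n = Suc m + m + 1"
    by simp
  then have "pell (2 * n) = pell (Suc m + 1) * pell (m + 1) + pell (Suc m) * pell m"
    by (simp only: pell_add)
  then show ?thesis
    using Suc by (simp del: pell.simps add: algebra_simps)
qed simp

theorem proposition7p5:
  fixes n :: nat
  assumes "n \<ge> 1"
  shows "7 * (pell n)^2 = - 3 * (pell (n - 1))^2 + 2 * pell n * pell (n - 1)
           - 4 * (pell (n + 1))^2 - 2 * pell (2 * n) + 2 * pell n * pell (n + 1)
           + 3 * pell (2 * n - 1) + 4 * pell (2 * n + 1)"
proof -
  obtain m where n: "n = Suc m"
    using assms by (cases n) auto
  have "pell (2 * n - 1) = (pell n)\<^sup>2 + (pell (n - 1))\<^sup>2"
    using pell_double_Suc[of m] n by simp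
  moreover have "pell (n + 1) = 2 * pell n + pell (n - 1)"
    using n by simp
  ultimately show ?thesis
    using pell_double[of n] pell_double_Suc[of n]
    by (simp del: pell.simps add: algebra_simps power2_eq_square)
qed

end
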